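(* For all $n,k\in\mathbb{N}$ with $n\ge k+2$, $$\tau_{n,k}^2\le \frac12\Big(1+\frac{k}{n}\Big)\Big(\frac{n}{k}\Big)^{2k}\binom{n+k}{n-k}^{-1}\le c_1^2\,k^{1/2}\Big(1-\frac{k^2}{n^2}\Big)^{1/2}\frac{(2n)^{2k}(n-k)^{n-k}}{(n+k)^{n+k}},\qquad c_1^2=\frac{e^2}{2\sqrt\pi}.$$
   Context: $T_n$ denotes the Chebyshev polynomial of the first kind of degree $n$, $T_n(\cos\theta)=\cos n\theta$. For integers $n\ge k+2$, $k\ge 1$, let $\omega_{n,k}$ be the rightmost (largest) zero of $T_n^{(k+1)}$ and define $\tau_{n,k}:=|T_n^{(k)}(\omega_{n,k})|/T_n^{(k)}(1)$. *)

theory Defs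
  imports "HOL-Computational_Algebra.Polynomial" Complex_Main
begin

fun cheb_T :: "nat \<Rightarrow> real poly" where
  "cheb_T 0 = 1"
| "cheb_T (Suc 0) = [:0, 1:]"
| "cheb_T (Suc (Suc n)) = [:0, 2:] * cheb_T (Suc n) - cheb_T n"

definition cheb_T_deriv :: "nat \<Rightarrow> nat \<Rightarrow> real poly" where
  "cheb_T_deriv n k = (pderiv ^^ k) (cheb_T n)"

definition omega :: "nat \<Rightarrow> nat \<Rightarrow> real" where
  "omega n k = Max {x :: real. poly (cheb_T_deriv n (k + 1)) x = 0}"

definition tau :: "nat \<Rightarrow> nat \<Rightarrow> real" where
  "tau n k = \<bar>poly (cheb_T_deriv n k) (omega n k)\<bar> / poly (cheb_T_deriv n k) 1"

end

theory Submission
  imports Defs "HOL-Analysis.Complex_Transcendental"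
begin

(* Write y_j = T_n^(j). Differentiating the Chebyshev equation j times gives
     (1 - x^2) y_(j+2) - (2j+1) x y_(j+1) + (n^2 - j^2) y_j = 0,
   so y_j(1) = prod_(i<j) (n^2 - i^2) / (2j-1)!!, the values y_j(0), y_(j+1)(0) are explicit
   (one of them vanishes), and by Rolle all zeros of y_j lie in (-1,1).
   For the Sonin function (1 - x^2) y_(k+2) - (k+1) x y_(k+1), a maximum argument for the weight
   (1 - x^2)^(k+1) y_(k+1)^2 on [omega, 1] shows n^2 (1 - omega^2) >= k(k+1).
   The energy (1 - x^2)^(k-1) [((1 - x^2) y_(k+1) - k x y_k)^2 + (n^2 (1 - x^2) - k(k-1)) y_k^2]
   is non-increasing on [0, 1); comparing it at omega, where y_(k+1) vanishes, and at 0 bounds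
   y_k(omega)^2, and dividing by y_k(1)^2 gives the first inequality.
   The second one is Stirling's formula for the binomial coefficient, with the remainder
   ln m! - (m + 1/2) ln m + m confined to [9/10, 2 - (3/2) ln 2] for m >= 2. *)

lemma pderiv_cheb_T_Suc_Suc:
  "pderiv (cheb_T (Suc (Suc n))) = [:2:] * cheb_T (Suc n) + [:0, 2:] * pderiv (cheb_T (Suc n)) - pderiv (cheb_T n)"
  by (simp add: pderiv_mult pderiv_diff pderiv_pCons pderiv_smult)

lemma poly_pderiv_cheb_T_Suc_Suc:
  "poly (pderiv (cheb_T (Suc (Suc n)))) x
     = 2 * poly (cheb_T (Suc n)) x + 2 * x * poly (pderiv (cheb_T (Suc n))) x - poly (pderiv (cheb_T n)) x"
  unfolding pderiv_cheb_T_Suc_Suc by simp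

lemma poly_pderiv2_cheb_T_Suc_Suc:
  "poly (pderiv (pderiv (cheb_T (Suc (Suc n))))) x
     = 4 * poly (pderiv (cheb_T (Suc n))) x + 2 * x * poly (pderiv (pderiv (cheb_T (Suc n)))) x
       - poly (pderiv (pderiv (cheb_T n))) x"
  unfolding pderiv_cheb_T_Suc_Suc by (simp add: pderiv_mult pderiv_diff pderiv_add pderiv_pCons pderiv_smult algebra_simps)

lemma poly_cheb_T_one: "poly (cheb_T n) 1 = 1"
  by (induct n rule: cheb_T.induct) auto

lemma poly_cheb_T_minus: "poly (cheb_T n) (- x) = (- 1) ^ n * poly (cheb_T n) x"
  by (induct n rule: cheb_T.induct) (auto simp: algebra_simps)

lemma poly_cheb_T_cos: "poly (cheb_T n) (cos t) = cos (real n * t)"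
proof (induct n rule: cheb_T.induct)
  case (3 n)
  have "cos (real (Suc (Suc n)) * t) = cos (real (Suc n) * t + t)"
    by (simp add: algebra_simps)
  also have "\<dots> = 2 * cos t * cos (real (Suc n) * t) - cos (real n * t)"
    using cos_add[of "real (Suc n) * t" t] cos_diff[of "real (Suc n) * t" t] by (simp add: algebra_simps)
  finally show ?case using 3 by simp
qed auto

lemma cheb_T_pderiv_eq:
  "(1 - x\<^sup>2) * poly (pderiv (cheb_T (Suc m))) x = real (Suc m) * (poly (cheb_T m) x - x * poly (cheb_T (Suc m)) x)"
proof (induct m rule: cheb_T.induct)
  case 1
  then show ?case by (simp add: power2_eq_square pderiv_pCons)
next
  case 2
  then show ?case
    using poly_pderiv_cheb_T_Suc_Suc[of 0 x] by (simp add: pderiv_pCons power2_eq_square algebra_simps)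
next
  case (3 n)
  then show ?case
    using poly_pderiv_cheb_T_Suc_Suc[of "Suc n" x] unfolding of_nat_Suc by (simp, algebra)
qed

lemma cheb_T_ode:
  "(1 - x\<^sup>2) * poly (pderiv (pderiv (cheb_T n))) x - x * poly (pderiv (cheb_T n)) x
     + (real n)\<^sup>2 * poly (cheb_T n) x = 0"
proof (induct n rule: cheb_T.induct)
  case (3 n)
  then show ?case
    using cheb_T_pderiv_eq[of x n] poly_pderiv2_cheb_T_Suc_Suc[of n x] poly_pderiv_cheb_T_Suc_Suc[of n x]
    unfolding of_nat_Suc by (simp, algebra)
qed (simp_all add: pderiv_pCons)

lemma degree_cheb_T: "degree (cheb_T n) \<le> n"
proof (induct n rule: cheb_T.induct)
  case (3 n)
  have "degree ([:0, 2:] * cheb_T (Suc n)) \<le> Suc (Suc n)"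
    using degree_mult_le[of "[:0, 2:]" "cheb_T (Suc n)"] 3 by simp
  moreover have "degree (cheb_T n) \<le> Suc (Suc n)"
    using 3 by simp
  ultimately show ?case by (simp add: degree_diff_le)
qed auto

abbreviation chebD :: "nat \<Rightarrow> nat \<Rightarrow> real \<Rightarrow> real" where
  "chebD n j x \<equiv> poly (cheb_T_deriv n j) x"

lemma cheb_T_deriv_0 [simp]: "cheb_T_deriv n 0 = cheb_T n"
  by (simp add: cheb_T_deriv_def)

lemma cheb_T_deriv_Suc: "cheb_T_deriv n (Suc j) = pderiv (cheb_T_deriv n j)"
  by (simp add: cheb_T_deriv_def)

lemma degree_cheb_T_deriv: "degree (cheb_T_deriv n j) \<le> n - j"
  by (induct j) (use degree_cheb_T in \<open>auto simp: cheb_T_deriv_Suc degree_pderiv\<close>)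

lemma DERIV_chebD [derivative_intros]:
  "d = chebD n (Suc j) x \<Longrightarrow> ((\<lambda>x. chebD n j x) has_real_derivative d) (at x within S)"
  unfolding cheb_T_deriv_Suc by (auto intro: has_field_derivative_at_within poly_DERIV)

lemma chebD_ode:
  "(1 - x\<^sup>2) * chebD n (Suc (Suc j)) x - (2 * real j + 1) * x * chebD n (Suc j) x
     + ((real n)\<^sup>2 - (real j)\<^sup>2) * chebD n j x = 0"
proof (induct j arbitrary: x)
  case 0
  show ?case using cheb_T_ode[of x n] by (simp add: cheb_T_deriv_Suc)
next
  case (Suc j)
  define f where "f x = (1 - x\<^sup>2) * chebD n (Suc (Suc j)) x - (2 * real j + 1) * x * chebD n (Suc j) x
      + ((real n)\<^sup>2 - (real j)\<^sup>2) * chebD n j x" for x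
  have "(f has_real_derivative (- 2 * x) * chebD n (Suc (Suc j)) x + (1 - x\<^sup>2) * chebD n (Suc (Suc (Suc j))) x
      - (2 * real j + 1) * chebD n (Suc j) x - (2 * real j + 1) * x * chebD n (Suc (Suc j)) x
      + ((real n)\<^sup>2 - (real j)\<^sup>2) * chebD n (Suc j) x) (at x)"
    unfolding f_def by (auto intro!: derivative_eq_intros simp: algebra_simps power2_eq_square)
  moreover have "f = (\<lambda>_. 0)"
    using Suc by (simp add: f_def fun_eq_iff)
  then have "(f has_real_derivative 0) (at x)"
    by simp
  ultimately show ?case
    by (auto dest: DERIV_unique simp: algebra_simps power2_eq_square)
qed

definition sq_diff_prod :: "nat \<Rightarrow> nat \<Rightarrow> real" where
  "sq_diff_prod n j = (\<Prod>i<j. (real n)\<^sup>2 - (real i)\<^sup>2)"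

definition odd_prod :: "nat \<Rightarrow> real" where
  "odd_prod j = (\<Prod>i<j. 2 * real i + 1)"

lemma sq_diff_prod_Suc: "sq_diff_prod n (Suc j) = sq_diff_prod n j * ((real n)\<^sup>2 - (real j)\<^sup>2)"
  by (simp add: sq_diff_prod_def)

lemma sq_diff_prod_pos: "j \<le> n \<Longrightarrow> 0 < sq_diff_prod n j"
  unfolding sq_diff_prod_def by (intro prod_pos) (auto intro: power_strict_mono)

lemma odd_prod_pos: "0 < odd_prod j"
  unfolding odd_prod_def by (intro prod_pos) auto

lemma chebD_one: "chebD n j 1 = sq_diff_prod n j / odd_prod j"
proof (induct j)
  case 0
  then show ?case by (simp add: sq_diff_prod_def odd_prod_def poly_cheb_T_one)
next
  case (Suc j)
  have "(2 * real j + 1) * chebD n (Suc j) 1 = ((real n)\<^sup>2 - (real j)\<^sup>2) * chebD n j 1"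
    using chebD_ode[of 1 n j] by simp
  then have "chebD n (Suc j) 1 = ((real n)\<^sup>2 - (real j)\<^sup>2) * chebD n j 1 / (2 * real j + 1)"
    by (simp add: field_simps add_pos_pos)
  then show ?case
    using Suc by (simp add: sq_diff_prod_def odd_prod_def)
qed

lemma chebD_one_pos: "j \<le> n \<Longrightarrow> 0 < chebD n j 1"
  using chebD_one sq_diff_prod_pos odd_prod_pos by simp

lemma chebD_minus: "chebD n j (- x) = (- 1) ^ (n + j) * chebD n j x"
proof (induct j arbitrary: x)
  case 0
  then show ?case by (simp add: poly_cheb_T_minus)
next
  case (Suc j)
  have "((\<lambda>x. chebD n j (- x)) has_real_derivative - chebD n (Suc j) (- x)) (at x)"
    by (auto intro!: derivative_eq_intros simp: cheb_T_deriv_Suc)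
  moreover have "((\<lambda>x. chebD n j (- x)) has_real_derivative (- 1) ^ (n + j) * chebD n (Suc j) x) (at x)"
    unfolding Suc by (auto intro!: derivative_eq_intros)
  ultimately show ?case
    by (auto dest: DERIV_unique)
qed

lemma chebD_zero_Suc_Suc: "chebD n (Suc (Suc j)) 0 = - ((real n)\<^sup>2 - (real j)\<^sup>2) * chebD n j 0"
proof -
  have "chebD n (Suc (Suc j)) 0 + ((real n)\<^sup>2 - (real j)\<^sup>2) * chebD n j 0 = 0"
    using chebD_ode[of 0 n j] by simp
  then show ?thesis by linarith
qed

section \<open>Zeros of the derivatives\<close>

lemma card_roots_pderiv:
  fixes p :: "real poly"
  assumes "finite S" "card S = Suc r" "\<forall>x\<in>S. poly p x = 0"
  shows "\<exists>T. finite T \<and> card T = r \<and> T \<subseteq> {Min S<..<Max S} \<and> (\<forall>x\<in>T. poly (pderiv p) x = 0)"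
  using assms
proof (induct r arbitrary: S)
  case 0
  then show ?case by (intro exI[of _ "{}"]) auto
next
  case (Suc r)
  define s where "s = Max S"
  define S' where "S' = S - {s}"
  have "S \<noteq> {}" using Suc.prems by auto
  then have "s \<in> S" unfolding s_def using Suc.prems by auto
  then have S': "finite S'" "card S' = Suc r" "S' \<subseteq> S"
    using Suc.prems unfolding S'_def by auto
  then have "S' \<noteq> {}" by auto
  define m where "m = Max S'"
  have "m \<in> S'" using S' \<open>S' \<noteq> {}\<close> unfolding m_def by simp
  obtain T where T: "finite T" "card T = r" "T \<subseteq> {Min S'<..<m}" "\<forall>x\<in>T. poly (pderiv p) x = 0"
    using Suc.hyps[of S'] S' Suc.prems unfolding m_def by auto
  have "m < s"
    using \<open>m \<in> S'\<close> S'(1) Suc.prems unfolding s_def S'_def by (auto simp: order.strict_iff_order)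
  then obtain c where c: "m < c" "c < s" "poly (pderiv p) c = 0"
    using poly_MVT[of m s p] \<open>m \<in> S'\<close> \<open>s \<in> S\<close> S'(3) Suc.prems by auto
  have "Min S \<le> Min S'"
    using S' \<open>S' \<noteq> {}\<close> Suc.prems(1) by (intro Min_antimono) auto
  moreover have "Min S' \<le> m"
    using \<open>m \<in> S'\<close> S'(1) by simp
  ultimately have "Min S < c"
    using c(1) by linarith
  have "T \<subseteq> {Min S<..<s}"
  proof
    fix x assume "x \<in> T"
    then have "Min S' < x" "x < m" using T(3) by (meson greaterThanLessThan_iff subsetD)+
    then show "x \<in> {Min S<..<s}" using \<open>Min S \<le> Min S'\<close> \<open>m < s\<close> by simp
  qed
  moreover have "c \<notin> T"
    using T(3) c(1) by (meson greaterThanLessThan_iff less_asym subsetD)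
  ultimately have "insert c T \<subseteq> {Min S<..<Max S}" "card (insert c T) = Suc r"
    using T(1,2) c(2) \<open>Min S < c\<close> unfolding s_def by simp_all
  then show ?case
    using T(1,4) c(3) by (intro exI[of _ "insert c T"]) simp
qed

lemma cheb_T_roots:
  assumes "0 < n"
  shows "\<exists>S. finite S \<and> card S = n \<and> S \<subseteq> {-1<..<1} \<and> (\<forall>x\<in>S. poly (cheb_T n) x = 0)"
proof -
  define \<theta> where "\<theta> i = (2 * real i + 1) * pi / (2 * real n)" for i
  have \<theta>_range: "0 < \<theta> i \<and> \<theta> i < pi" if "i < n" for i
  proof -
    have "(2 * real i + 1) * pi < (2 * real n) * pi"
      using that by (intro mult_strict_right_mono) auto
    moreover have "0 < (2 * real i + 1) * pi"
      by simp
    ultimately show ?thesis unfolding \<theta>_def using assms by (auto simp: field_simps)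
  qed
  define S where "S = (\<lambda>i. cos (\<theta> i)) ` {..<n}"
  have "inj_on (\<lambda>i. cos (\<theta> i)) {..<n}"
  proof (rule inj_onI)
    fix i j assume "i \<in> {..<n}" "j \<in> {..<n}" "cos (\<theta> i) = cos (\<theta> j)"
    then have "\<theta> i = \<theta> j" using \<theta>_range cos_inj_pi[of "\<theta> i" "\<theta> j"] by (auto simp: less_imp_le)
    then show "i = j" unfolding \<theta>_def using assms by (auto simp: field_simps)
  qed
  then have "card S = n" unfolding S_def by (simp add: card_image)
  moreover have "S \<subseteq> {-1<..<1}"
  proof
    fix x assume "x \<in> S"
    then obtain i where i: "i < n" "x = cos (\<theta> i)" unfolding S_def by auto
    have "cos pi < cos (\<theta> i)" "cos (\<theta> i) < cos 0"
      using \<theta>_range[OF i(1)] by (intro cos_monotone_0_pi; simp)+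
    then show "x \<in> {-1<..<1}" using i by auto
  qed
  moreover have "poly (cheb_T n) x = 0" if "x \<in> S" for x
  proof -
    obtain i where i: "i < n" "x = cos (\<theta> i)" using \<open>x \<in> S\<close> unfolding S_def by auto
    have "real n * \<theta> i = real i * pi + pi / 2" unfolding \<theta>_def using assms by (simp add: field_simps)
    then show ?thesis using i by (simp add: poly_cheb_T_cos cos_add)
  qed
  ultimately show ?thesis unfolding S_def by auto
qed

lemma chebD_roots:
  assumes "j \<le> n"
  shows "\<exists>S. finite S \<and> card S = n - j \<and> S \<subseteq> {-1<..<1} \<and> (\<forall>x\<in>S. chebD n j x = 0)"
  using assms
proof (induct j)
  case 0
  show ?case
  proof (cases "n = 0")
    case True
    then show ?thesis by (intro exI[of _ "{}"]) auto
  next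
    case False
    then show ?thesis using cheb_T_roots[of n] by simp
  qed
next
  case (Suc j)
  then obtain S where S: "finite S" "card S = Suc (n - Suc j)" "S \<subseteq> {-1<..<1}" "\<forall>x\<in>S. chebD n j x = 0"
    by (auto simp: Suc_diff_Suc)
  then have "S \<noteq> {}" by auto
  then have "Min S \<in> S" "Max S \<in> S"
    using S(1) by simp_all
  then have "{Min S<..<Max S} \<subseteq> {-1<..<1}"
    using S(3) by (auto simp: subset_eq)
  moreover obtain T where "finite T" "card T = n - Suc j" "T \<subseteq> {Min S<..<Max S}"
      "\<forall>x\<in>T. chebD n (Suc j) x = 0"
    using card_roots_pderiv[OF S(1,2,4)] unfolding cheb_T_deriv_Suc by blast
  ultimately show ?case
    by (intro exI[of _ T]) auto
qed

lemma chebD_root_set: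
  assumes "j < n"
  shows "finite {x. chebD n j x = 0}" "{x. chebD n j x = 0} \<noteq> {}" "{x. chebD n j x = 0} \<subseteq> {-1<..<1}"
proof -
  define Z where "Z = {x. chebD n j x = 0}"
  have "cheb_T_deriv n j \<noteq> 0"
    using chebD_one_pos[of j n] assms by auto
  then have "finite Z" "card Z \<le> n - j"
    using poly_roots_finite card_poly_roots_bound[of "cheb_T_deriv n j"] degree_cheb_T_deriv[of n j]
    unfolding Z_def by auto
  obtain S where S: "finite S" "card S = n - j" "S \<subseteq> {-1<..<1}" "\<forall>x\<in>S. chebD n j x = 0"
    using chebD_roots[of j n] assms by auto
  have "S = Z"
    using S(2,4) \<open>finite Z\<close> \<open>card Z \<le> n - j\<close> by (intro card_seteq) (auto simp: Z_def)
  then show "finite {x. chebD n j x = 0}" "{x. chebD n j x = 0} \<noteq> {}" "{x. chebD n j x = 0} \<subseteq> {-1<..<1}"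
    using S(2,3) assms \<open>finite Z\<close> unfolding Z_def by auto
qed

section \<open>The largest zero of the (k+1)-th derivative\<close>

definition sonin :: "nat \<Rightarrow> nat \<Rightarrow> real \<Rightarrow> real" where
  "sonin n k x = (1 - x\<^sup>2) * chebD n (Suc (Suc k)) x - real (Suc k) * x * chebD n (Suc k) x"

lemma DERIV_sonin:
  "(sonin n k has_real_derivative
      real k * x * chebD n (Suc (Suc k)) x + (real k * (real k + 1) - (real n)\<^sup>2) * chebD n (Suc k) x) (at x)"
proof -
  have "(1 - x\<^sup>2) * chebD n (Suc (Suc (Suc k))) x
      = (2 * real (Suc k) + 1) * x * chebD n (Suc (Suc k)) x - ((real n)\<^sup>2 - (real (Suc k))\<^sup>2) * chebD n (Suc k) x"
    using chebD_ode[of x n "Suc k"] by (simp add: algebra_simps)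
  then show ?thesis
    unfolding sonin_def[abs_def]
    by (auto intro!: derivative_eq_intros simp: algebra_simps power2_eq_square)
qed

definition sonin_weight :: "nat \<Rightarrow> nat \<Rightarrow> real \<Rightarrow> real" where
  "sonin_weight n k x = (1 - x\<^sup>2) ^ Suc k * (chebD n (Suc k) x)\<^sup>2"

lemma DERIV_sonin_weight:
  "(sonin_weight n k has_real_derivative 2 * (1 - x\<^sup>2) ^ k * chebD n (Suc k) x * sonin n k x) (at x)"
  unfolding sonin_def sonin_weight_def[abs_def]
  by ((rule derivative_eq_intros refl | simp)+, (simp add: algebra_simps power2_eq_square)?)

context
  fixes n k :: nat
  assumes k_less_n: "Suc k < n"
begin

lemma omega_root: "chebD n (Suc k) (omega n k) = 0"
  and omega_less_one: "omega n k < 1"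
  and chebD_root_le_omega: "chebD n (Suc k) x = 0 \<Longrightarrow> x \<le> omega n k"
proof -
  note Z = chebD_root_set[OF k_less_n]
  have "omega n k \<in> {x. chebD n (Suc k) x = 0}"
    unfolding omega_def using Max_in[OF Z(1,2)] by simp
  then show "chebD n (Suc k) (omega n k) = 0" "omega n k < 1"
    using Z(3) by auto
  show "chebD n (Suc k) x = 0 \<Longrightarrow> x \<le> omega n k"
    unfolding omega_def using Z(1) by simp
qed

lemma omega_nonneg: "0 \<le> omega n k"
proof -
  have "chebD n (Suc k) (- omega n k) = 0"
    using omega_root chebD_minus[of n "Suc k" "omega n k"] by simp
  then have "- omega n k \<le> omega n k"
    by (rule chebD_root_le_omega)
  then show ?thesis by simp
qed

lemma chebD_pos_above_omega:
  assumes "omega n k < x" "x \<le> 1"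
  shows "0 < chebD n (Suc k) x"
proof (rule ccontr)
  assume "\<not> 0 < chebD n (Suc k) x"
  moreover have "0 < chebD n (Suc k) 1"
    using chebD_one_pos k_less_n by simp
  ultimately obtain c where "x \<le> c" "c < 1" "chebD n (Suc k) c = 0"
    using poly_IVT_pos[of x 1 "cheb_T_deriv n (Suc k)"] assms(2)
    by (cases "chebD n (Suc k) x = 0") (fastforce simp: not_less order.order_iff_strict)+
  then show False
    using chebD_root_le_omega[of c] assms(1) by simp
qed

lemma sonin_weight_interior_max:
  obtains \<xi> where "omega n k < \<xi>" "\<xi> < 1" "sonin n k \<xi> = 0"
    "\<forall>y\<in>{omega n k..1}. sonin_weight n k y \<le> sonin_weight n k \<xi>"
proof -
  note dw = DERIV_sonin_weight[of n k]
  have "continuous_on {omega n k..1} (sonin_weight n k)"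
    using dw by (meson DERIV_isCont continuous_at_imp_continuous_on)
  obtain \<xi> where \<xi>: "\<xi> \<in> {omega n k..1}" "\<forall>y\<in>{omega n k..1}. sonin_weight n k y \<le> sonin_weight n k \<xi>"
    using continuous_attains_sup[OF compact_Icc _ \<open>continuous_on {omega n k..1} (sonin_weight n k)\<close>]
      omega_less_one by auto
  define m where "m = (omega n k + 1) / 2"
  have "omega n k < m" "m < 1"
    unfolding m_def using omega_less_one by simp_all
  then have "0 < sonin_weight n k m"
    unfolding sonin_weight_def using chebD_pos_above_omega[of m] omega_nonneg
    by (intro mult_pos_pos zero_less_power) (auto simp: abs_square_less_1)
  moreover have "sonin_weight n k m \<le> sonin_weight n k \<xi>"
    using \<xi>(2) \<open>omega n k < m\<close> \<open>m < 1\<close> by simp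
  ultimately have "0 < sonin_weight n k \<xi>"
    by linarith
  moreover have "sonin_weight n k (omega n k) = 0" "sonin_weight n k 1 = 0"
    unfolding sonin_weight_def using omega_root by simp_all
  ultimately have \<xi>_in: "omega n k < \<xi>" "\<xi> < 1"
    using \<xi>(1) by (auto simp: order.order_iff_strict)
  have "2 * (1 - \<xi>\<^sup>2) ^ k * chebD n (Suc k) \<xi> * sonin n k \<xi> = 0"
  proof (rule DERIV_local_max[OF dw])
    show "0 < min (\<xi> - omega n k) (1 - \<xi>)"
      using \<xi>_in by simp
    show "\<forall>y. \<bar>\<xi> - y\<bar> < min (\<xi> - omega n k) (1 - \<xi>) \<longrightarrow> sonin_weight n k y \<le> sonin_weight n k \<xi>"
      using \<xi>(2) by (auto simp: abs_less_iff)
  qed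
  moreover have "0 < 1 - \<xi>\<^sup>2" "0 < chebD n (Suc k) \<xi>"
    using \<xi>_in omega_nonneg chebD_pos_above_omega[of \<xi>] by (auto simp: abs_square_less_1)
  ultimately show ?thesis
    using that \<xi>_in \<xi>(2) by simp
qed

lemma sonin_weight_increases:
  assumes "omega n k < \<xi>" "\<xi> < 1" "sonin n k \<xi> = 0"
    and "0 < real k * \<xi> * chebD n (Suc (Suc k)) \<xi> + (real k * (real k + 1) - (real n)\<^sup>2) * chebD n (Suc k) \<xi>"
  obtains t where "\<xi> < t" "t < 1" "sonin_weight n k \<xi> < sonin_weight n k t"
proof -
  obtain d where d: "0 < d" "\<forall>h>0. h < d \<longrightarrow> sonin n k \<xi> < sonin n k (\<xi> + h)"
    using DERIV_pos_inc_right[OF DERIV_sonin assms(4)] by blast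
  define t where "t = \<xi> + min d (1 - \<xi>) / 2"
  have t: "\<xi> < t" "t < 1" "t - \<xi> < d"
    unfolding t_def using d(1) assms(2) by (auto simp: min_def field_simps)
  have "sonin_weight n k \<xi> < sonin_weight n k t"
  proof (rule DERIV_pos_imp_increasing_open[of \<xi> t])
    show "\<xi> < t"
      using t by simp
    show "continuous_on {\<xi>..t} (sonin_weight n k)"
      using DERIV_sonin_weight by (auto intro!: continuous_at_imp_continuous_on DERIV_isCont)
  next
    fix y assume y: "\<xi> < y" "y < t"
    have "0 < sonin n k y"
      using d(2)[rule_format, of "y - \<xi>"] y t assms(3) by simp
    moreover have "0 < chebD n (Suc k) y" "0 < 1 - y\<^sup>2"
      using y t assms(1) omega_nonneg chebD_pos_above_omega[of y] by (auto simp: abs_square_less_1)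
    ultimately show "\<exists>d. (sonin_weight n k has_real_derivative d) (at y) \<and> 0 < d"
      using DERIV_sonin_weight by fastforce
  qed
  then show ?thesis
    using that t by blast
qed

lemma omega_lower_bound: "real k * (real k + 1) \<le> (real n)\<^sup>2 * (1 - (omega n k)\<^sup>2)"
proof (rule ccontr)
  assume contra: "\<not> ?thesis"
  obtain \<xi> where \<xi>: "omega n k < \<xi>" "\<xi> < 1" "sonin n k \<xi> = 0"
    "\<forall>y\<in>{omega n k..1}. sonin_weight n k y \<le> sonin_weight n k \<xi>"
    by (rule sonin_weight_interior_max)
  have "(omega n k)\<^sup>2 < \<xi>\<^sup>2"
    using \<xi>(1) omega_nonneg by (intro power_strict_mono) auto
  then have "(real n)\<^sup>2 * (1 - \<xi>\<^sup>2) < real k * (real k + 1)"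
    using contra by (smt (verit) mult_left_mono zero_le_power2)
  moreover have "0 < chebD n (Suc k) \<xi>"
    using \<xi>(1,2) chebD_pos_above_omega[of \<xi>] by simp
  ultimately have pos: "0 < chebD n (Suc k) \<xi> * (real k * (real k + 1) - (real n)\<^sup>2 * (1 - \<xi>\<^sup>2))"
    by simp
  define g' where
    "g' = real k * \<xi> * chebD n (Suc (Suc k)) \<xi> + (real k * (real k + 1) - (real n)\<^sup>2) * chebD n (Suc k) \<xi>"
  \<comment> \<open>at a zero of the Sonin function the ODE fixes the sign of its derivative\<close>
  have "(1 - \<xi>\<^sup>2) * g' = chebD n (Suc k) \<xi> * (real k * (real k + 1) - (real n)\<^sup>2 * (1 - \<xi>\<^sup>2))"
    using \<xi>(3) unfolding g'_def sonin_def of_nat_Suc by algebra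
  with pos have "0 < (1 - \<xi>\<^sup>2) * g'"
    by simp
  moreover have "0 < 1 - \<xi>\<^sup>2"
    using \<xi>(1,2) omega_nonneg by (simp add: abs_square_less_1)
  ultimately have "0 < g'"
    by (simp add: zero_less_mult_iff)
  then obtain t where "\<xi> < t" "t < 1" "sonin_weight n k \<xi> < sonin_weight n k t"
    using sonin_weight_increases \<xi>(1-3) unfolding g'_def by blast
  moreover have "sonin_weight n k t \<le> sonin_weight n k \<xi>"
    using \<xi>(1,4) \<open>\<xi> < t\<close> \<open>t < 1\<close> by simp
  ultimately show False
    by simp
qed

end

section \<open>The energy function\<close>

definition cheb_energy :: "nat \<Rightarrow> nat \<Rightarrow> real \<Rightarrow> real" where
  "cheb_energy n k x = (1 - x\<^sup>2) ^ (k - 1) *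
     (((1 - x\<^sup>2) * chebD n (Suc k) x - real k * x * chebD n k x)\<^sup>2
      + ((real n)\<^sup>2 * (1 - x\<^sup>2) - real k * real (k - 1)) * (chebD n k x)\<^sup>2)"

lemma DERIV_cheb_energy:
  assumes "0 < k"
  obtains d where "(cheb_energy n k has_real_derivative d) (at x)"
    "(1 - x\<^sup>2) * d = - 2 * real k * real (k - 1) * x * (1 - x\<^sup>2) ^ (k - 1) * (chebD n k x)\<^sup>2"
proof -
  obtain j where k: "k = Suc j" using assms by (cases k) auto
  define y where "y = chebD n k"
  define y' where "y' = chebD n (Suc k)"
  define y'' where "y'' = chebD n (Suc (Suc k))"
  define F where "F x = ((1 - x\<^sup>2) * y' x - real k * x * y x)\<^sup>2
      + ((real n)\<^sup>2 * (1 - x\<^sup>2) - real k * real j) * (y x)\<^sup>2" for x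
  define F' where "F' x = 2 * ((1 - x\<^sup>2) * y' x - real k * x * y x)
        * ((- 2 * x) * y' x + (1 - x\<^sup>2) * y'' x - real k * y x - real k * x * y' x)
      + ((real n)\<^sup>2 * (- 2 * x)) * (y x)\<^sup>2 + ((real n)\<^sup>2 * (1 - x\<^sup>2) - real k * real j) * (2 * y x * y' x)" for x
  have dy: "(y has_real_derivative y' x) (at x)" "(y' has_real_derivative y'' x) (at x)"
    unfolding y_def y'_def y''_def by (auto intro!: derivative_eq_intros)
  have dF: "(F has_real_derivative F' x) (at x)"
    unfolding F_def F'_def
    by ((rule derivative_eq_intros dy refl | simp)+, (simp add: algebra_simps power2_eq_square)?)
  have "(1 - x\<^sup>2) * y'' x = (2 * real k + 1) * x * y' x - ((real n)\<^sup>2 - (real k)\<^sup>2) * y x"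
    using chebD_ode[of x n k] unfolding y_def y'_def y''_def by (simp add: algebra_simps)
  then have F': "(1 - x\<^sup>2) * F' x - 2 * real j * x * F x = - 2 * real k * real j * x * (y x)\<^sup>2"
    unfolding F'_def F_def k of_nat_Suc by algebra
  define E where "E x = (1 - x\<^sup>2) ^ j * F x" for x
  define E' where "E' = real j * (1 - x\<^sup>2) ^ (j - 1) * (- 2 * x) * F x + (1 - x\<^sup>2) ^ j * F' x"
  have dE: "(E has_real_derivative E') (at x)"
    unfolding E_def E'_def
    by ((rule derivative_eq_intros dF refl | simp)+, (simp add: algebra_simps power2_eq_square)?)
  have E: "cheb_energy n k = E"
    unfolding cheb_energy_def E_def F_def y_def y'_def k by (simp add: fun_eq_iff)
  have pw: "real j * (1 - x\<^sup>2) ^ (j - 1) * (1 - x\<^sup>2) = real j * (1 - x\<^sup>2) ^ j"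
    by (cases j) auto
  have "(1 - x\<^sup>2) * E' = (real j * (1 - x\<^sup>2) ^ (j - 1) * (1 - x\<^sup>2)) * (- 2 * x) * F x
      + (1 - x\<^sup>2) ^ j * ((1 - x\<^sup>2) * F' x)"
    unfolding E'_def by (simp add: algebra_simps)
  also have "\<dots> = (1 - x\<^sup>2) ^ j * ((1 - x\<^sup>2) * F' x - 2 * real j * x * F x)"
    unfolding pw by (simp add: algebra_simps)
  finally have "(1 - x\<^sup>2) * E' = - 2 * real k * real j * x * (1 - x\<^sup>2) ^ j * (y x)\<^sup>2"
    unfolding F' by (simp add: algebra_simps)
  then show ?thesis
    using that dE E unfolding k y_def by simp
qed

lemma cheb_energy_antitone:
  assumes "0 < k" "0 \<le> a" "a < 1"
  shows "cheb_energy n k a \<le> cheb_energy n k 0"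
proof (rule DERIV_nonpos_imp_nonincreasing[OF \<open>0 \<le> a\<close>])
  fix x assume x: "0 \<le> x" "x \<le> a"
  obtain d where d: "(cheb_energy n k has_real_derivative d) (at x)"
    "(1 - x\<^sup>2) * d = - 2 * real k * real (k - 1) * x * (1 - x\<^sup>2) ^ (k - 1) * (chebD n k x)\<^sup>2"
    using DERIV_cheb_energy[OF \<open>0 < k\<close>] by blast
  have "0 < 1 - x\<^sup>2"
    using x assms by (simp add: abs_square_less_1)
  moreover have "(1 - x\<^sup>2) * d \<le> 0"
    unfolding d(2) using x \<open>0 < 1 - x\<^sup>2\<close> by (simp add: mult_nonneg_nonpos)
  ultimately show "\<exists>d. (cheb_energy n k has_real_derivative d) (at x) \<and> d \<le> 0"
    using d(1) by (auto simp: mult_le_0_iff)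
qed

lemma cheb_energy_at_root:
  "chebD n (Suc k) a = 0 \<Longrightarrow>
     cheb_energy n k a = (chebD n k a)\<^sup>2 * (1 - a\<^sup>2) ^ (k - 1) * (((real n)\<^sup>2 - (real k)\<^sup>2) * (1 - a\<^sup>2) + real k)"
  unfolding cheb_energy_def by (cases k) (simp_all add: algebra_simps power2_eq_square)

lemma cheb_energy_zero:
  "cheb_energy n k 0 = (chebD n (Suc k) 0)\<^sup>2 + ((real n)\<^sup>2 - real k * real (k - 1)) * (chebD n k 0)\<^sup>2"
  unfolding cheb_energy_def by (simp add: power2_eq_square)

lemma chebD_zero_0_1:
  "chebD n 0 0 * chebD n 1 0 = 0" "(chebD n 0 0)\<^sup>2 \<le> 1" "(chebD n 1 0)\<^sup>2 \<le> (real n)\<^sup>2"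
proof -
  have T0: "chebD n 0 0 = cos (real n * (pi / 2))"
    using poly_cheb_T_cos[of n "pi / 2"] by simp
  have T1: "chebD n 1 0 = real n * sin (real n * (pi / 2))"
  proof (cases n)
    case (Suc m)
    have e: "real m * (pi / 2) = real n * (pi / 2) - pi / 2"
      using Suc by (simp add: algebra_simps)
    have "cos (real m * (pi / 2)) = sin (real n * (pi / 2))"
      unfolding e cos_diff by simp
    then show ?thesis
      using cheb_T_pderiv_eq[of 0 m] poly_cheb_T_cos[of m "pi / 2"] Suc by (simp add: cheb_T_deriv_Suc)
  qed (simp add: cheb_T_deriv_Suc)
  have "cos (real n * (pi / 2)) * sin (real n * (pi / 2)) = sin (real n * pi) / 2"
    using sin_double[of "real n * (pi / 2)"] by (simp add: algebra_simps)
  then show "chebD n 0 0 * chebD n 1 0 = 0"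
    unfolding T0 T1 by auto
  show "(chebD n 0 0)\<^sup>2 \<le> 1" "(chebD n 1 0)\<^sup>2 \<le> (real n)\<^sup>2"
    unfolding T0 T1 by (simp_all add: abs_square_le_1 power_mult_distrib mult_left_le)
qed

lemma chebD_zero_mult: "chebD n j 0 * chebD n (Suc j) 0 = 0"
proof (induct j)
  case 0
  then show ?case using chebD_zero_0_1(1) by simp
next
  case (Suc j)
  then show ?case by (auto simp: chebD_zero_Suc_Suc)
qed

(* One step of the recursion T_n^(j+2)(0) = -(n^2 - j^2) T_n^(j)(0), with a = n^2 - j^2,
   b = n^2 - (j+1)^2, c = n^2 - (j+2)^2. *)
lemma fourth_power_bound_step:
  fixes a b c v P A :: real
  assumes "v ^ 4 * a \<le> A * P\<^sup>2" "0 \<le> A" "a * c \<le> b\<^sup>2" "c \<le> a"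
  shows "(a * v) ^ 4 * c \<le> A * (P * a * b)\<^sup>2"
proof (cases "c \<le> 0")
  case True
  then have "(a * v) ^ 4 * c \<le> 0"
    by (simp add: mult_nonneg_nonpos)
  also have "0 \<le> A * (P * a * b)\<^sup>2"
    using assms by simp
  finally show ?thesis .
next
  case False
  then have "0 < c" "0 < a"
    using assms by simp_all
  have "(a * v) ^ 4 * c = (a ^ 3 * c) * (v ^ 4 * a)"
    by (simp add: algebra_simps power4_eq_xxxx power3_eq_cube)
  also have "\<dots> \<le> (a ^ 3 * c) * (A * P\<^sup>2)"
    using assms(1) \<open>0 < a\<close> \<open>0 < c\<close> by (intro mult_left_mono) auto
  also have "\<dots> = (a * c) * (A * P\<^sup>2 * a\<^sup>2)"
    by (simp add: algebra_simps power2_eq_square power3_eq_cube)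
  also have "\<dots> \<le> b\<^sup>2 * (A * P\<^sup>2 * a\<^sup>2)"
    using assms(2,3) by (intro mult_right_mono) auto
  also have "\<dots> = A * (P * a * b)\<^sup>2"
    by (simp add: algebra_simps power2_eq_square)
  finally show ?thesis .
qed

lemma chebD_zero_bound: "(chebD n j 0) ^ 4 * ((real n)\<^sup>2 - (real j)\<^sup>2) \<le> (real n)\<^sup>2 * (sq_diff_prod n j)\<^sup>2"
proof (induct j rule: nat_induct2)
  case 0
  have "(chebD n 0 0) ^ 4 \<le> 1"
    using chebD_zero_0_1(2) power_mono[of "(chebD n 0 0)\<^sup>2" 1 2] by (simp flip: power_mult)
  then show ?case
    by (simp add: sq_diff_prod_def mult_left_le_one_le)
next
  case 1
  have "(chebD n 1 0) ^ 4 \<le> ((real n)\<^sup>2)\<^sup>2"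
    using chebD_zero_0_1(3) power_mono[of "(chebD n 1 0)\<^sup>2" "(real n)\<^sup>2" 2] by (simp flip: power_mult)
  have "(chebD n 1 0) ^ 4 * ((real n)\<^sup>2 - 1) \<le> (chebD n 1 0) ^ 4 * (real n)\<^sup>2"
    by (intro mult_left_mono) auto
  also have "\<dots> \<le> ((real n)\<^sup>2)\<^sup>2 * (real n)\<^sup>2"
    using \<open>(chebD n 1 0) ^ 4 \<le> _\<close> by (intro mult_right_mono) auto
  finally have "(chebD n 1 0) ^ 4 * ((real n)\<^sup>2 - 1) \<le> ((real n)\<^sup>2)\<^sup>2 * (real n)\<^sup>2" .
  then show ?case
    by (simp add: sq_diff_prod_def algebra_simps power2_eq_square)
next
  case (step j)
  have "(((real n)\<^sup>2 - (real j)\<^sup>2) * (- chebD n j 0)) ^ 4 * ((real n)\<^sup>2 - (real (j + 2))\<^sup>2)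
      \<le> (real n)\<^sup>2 * (sq_diff_prod n j * ((real n)\<^sup>2 - (real j)\<^sup>2) * ((real n)\<^sup>2 - (real (Suc j))\<^sup>2))\<^sup>2"
    using step by (intro fourth_power_bound_step) (auto simp: algebra_simps power2_eq_square)
  moreover have "chebD n (j + 2) 0 = ((real n)\<^sup>2 - (real j)\<^sup>2) * (- chebD n j 0)"
    using chebD_zero_Suc_Suc[of n j] by (simp add: algebra_simps)
  ultimately show ?case
    by (simp add: sq_diff_prod_Suc)
qed

lemma sq_sum_ge_4_mult: "4 * a * b \<le> (a + b)\<^sup>2" for a b :: real
proof -
  have "(a + b)\<^sup>2 - 4 * a * b = (a - b)\<^sup>2"
    by (simp add: power2_eq_square algebra_simps)
  then show ?thesis
    by (smt (verit) zero_le_power2)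
qed

(* The two cases of the energy at 0, where T_n^(k+1)(0) resp. T_n^(k)(0) vanishes;
   N stands for n^2 - k^2. *)
lemma energy_bound_value_case:
  fixes N k c P v :: real
  assumes N: "4 * k + 4 \<le> N" and k: "1 \<le> k" and c: "3 \<le> 4 * k * c\<^sup>2" "0 \<le> c" and P: "0 \<le> P"
    and v: "v ^ 4 * N \<le> (N + k\<^sup>2) * P\<^sup>2"
  shows "(N + k) * v\<^sup>2 \<le> c * P * (N * (k + 1) + (N + k\<^sup>2))"
proof -
  define L where "L = N * (k + 1) + (N + k\<^sup>2)"
  have "0 < N" "0 \<le> N + k\<^sup>2"
    using N k by simp_all
  have "k * (N + k)\<^sup>2 \<le> 3 * N * (N * (k + 1))"
  proof -
    have "(N + k)\<^sup>2 \<le> (5 / 4 * N)\<^sup>2"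
      using N k by (intro power_mono) auto
    then have "k * (N + k)\<^sup>2 \<le> k * (25 / 16 * N\<^sup>2)"
      using k by (intro mult_left_mono) (auto simp: power2_eq_square)
    also have "\<dots> \<le> 3 * N * (N * (k + 1))"
      using k \<open>0 < N\<close> by (simp add: power2_eq_square algebra_simps)
    finally show ?thesis .
  qed
  have "4 * k * N * ((N + k) * v\<^sup>2)\<^sup>2 = 4 * k * (N + k)\<^sup>2 * (v ^ 4 * N)"
    by (simp add: power2_eq_square power4_eq_xxxx algebra_simps)
  also have "\<dots> \<le> 4 * k * (N + k)\<^sup>2 * ((N + k\<^sup>2) * P\<^sup>2)"
    using v k by (intro mult_left_mono) auto
  also have "\<dots> = 4 * (k * (N + k)\<^sup>2) * ((N + k\<^sup>2) * P\<^sup>2)"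
    by simp
  also have "\<dots> \<le> 4 * (3 * N * (N * (k + 1))) * ((N + k\<^sup>2) * P\<^sup>2)"
    using \<open>k * (N + k)\<^sup>2 \<le> _\<close> \<open>0 \<le> N + k\<^sup>2\<close> by (intro mult_right_mono mult_left_mono) auto
  also have "\<dots> = (3 * N * P\<^sup>2) * (4 * (N * (k + 1)) * (N + k\<^sup>2))"
    by (simp add: algebra_simps)
  also have "\<dots> \<le> (3 * N * P\<^sup>2) * L\<^sup>2"
    unfolding L_def using \<open>0 < N\<close> by (intro mult_left_mono sq_sum_ge_4_mult) auto
  also have "\<dots> = 3 * (N * P\<^sup>2 * L\<^sup>2)"
    by simp
  also have "\<dots> \<le> (4 * k * c\<^sup>2) * (N * P\<^sup>2 * L\<^sup>2)"
    using c \<open>0 < N\<close> by (intro mult_right_mono) auto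
  finally have "4 * k * N * ((N + k) * v\<^sup>2)\<^sup>2 \<le> 4 * k * N * (c * P * L)\<^sup>2"
    by (simp add: algebra_simps)
  then have "((N + k) * v\<^sup>2)\<^sup>2 \<le> (c * P * L)\<^sup>2"
    using k \<open>0 < N\<close> by simp
  moreover have "0 \<le> c * P * L"
    unfolding L_def using c P \<open>0 < N\<close> k by simp
  ultimately show ?thesis
    unfolding L_def using power2_le_imp_le by blast
qed

lemma energy_bound_slope_case:
  fixes N k c P v :: real
  assumes N: "4 * k + 4 \<le> N" and k: "1 \<le> k" and c: "3 \<le> 4 * k * c\<^sup>2" "0 \<le> c" and P: "0 \<le> P"
    and v: "v ^ 4 * (N - 2 * k - 1) \<le> (N + k\<^sup>2) * (P * N)\<^sup>2"
  shows "v\<^sup>2 \<le> c * P * (N * (k + 1) + (N + k\<^sup>2))"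
proof -
  define L where "L = N * (k + 1) + (N + k\<^sup>2)"
  define M where "M = N - 2 * k - 1"
  have "0 < N" "0 < M" "0 \<le> N + k\<^sup>2"
    using N k unfolding M_def by simp_all
  have "k * N \<le> 3 * M * (k + 1)"
  proof -
    have "k * N \<le> N * (k + 1)"
      using \<open>0 < N\<close> by (simp add: algebra_simps)
    also have "\<dots> \<le> 3 * M * (k + 1)"
      using N k unfolding M_def by (intro mult_right_mono) auto
    finally show ?thesis .
  qed
  have "4 * k * M * (v\<^sup>2)\<^sup>2 = 4 * k * (v ^ 4 * M)"
    by (simp add: power2_eq_square power4_eq_xxxx algebra_simps)
  also have "\<dots> \<le> 4 * k * ((N + k\<^sup>2) * (P * N)\<^sup>2)"
    using v k unfolding M_def by (intro mult_left_mono) auto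
  also have "\<dots> = (k * N) * (4 * N * (N + k\<^sup>2) * P\<^sup>2)"
    by (simp add: algebra_simps power2_eq_square)
  also have "\<dots> \<le> (3 * M * (k + 1)) * (4 * N * (N + k\<^sup>2) * P\<^sup>2)"
    using \<open>k * N \<le> _\<close> \<open>0 < N\<close> \<open>0 \<le> N + k\<^sup>2\<close> by (intro mult_right_mono) auto
  also have "\<dots> = (3 * M * P\<^sup>2) * (4 * (N * (k + 1)) * (N + k\<^sup>2))"
    by (simp add: algebra_simps)
  also have "\<dots> \<le> (3 * M * P\<^sup>2) * L\<^sup>2"
    unfolding L_def using \<open>0 < M\<close> by (intro mult_left_mono sq_sum_ge_4_mult) auto
  also have "\<dots> = 3 * (M * P\<^sup>2 * L\<^sup>2)"
    by simp
  also have "\<dots> \<le> (4 * k * c\<^sup>2) * (M * P\<^sup>2 * L\<^sup>2)"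
    using c \<open>0 < M\<close> by (intro mult_right_mono) auto
  finally have "4 * k * M * (v\<^sup>2)\<^sup>2 \<le> 4 * k * M * (c * P * L)\<^sup>2"
    by (simp add: algebra_simps)
  then have "(v\<^sup>2)\<^sup>2 \<le> (c * P * L)\<^sup>2"
    using k \<open>0 < M\<close> by simp
  moreover have "0 \<le> c * P * L"
    unfolding L_def using c P \<open>0 < N\<close> k by simp
  ultimately show ?thesis
    unfolding L_def using power2_le_imp_le by blast
qed

lemma fact_double: "(fact (2 * k) :: real) = odd_prod k * 2 ^ k * fact k"
proof (induct k)
  case 0
  then show ?case by (simp add: odd_prod_def)
next
  case (Suc k)
  have "(fact (2 * Suc k) :: real) = (2 * real k + 2) * (2 * real k + 1) * fact (2 * k)"
    by (simp add: algebra_simps)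
  then show ?case
    using Suc by (simp add: odd_prod_def algebra_simps)
qed

lemma binomial_eq_sq_diff_prod:
  assumes "k \<le> n" "0 < n"
  shows "real ((n + k) choose (n - k)) = real (n + k) * sq_diff_prod n k / (real n * odd_prod k * 2 ^ k * fact k)"
proof -
  have "(fact (n + k) :: real) * real n = fact (n - k) * real (n + k) * sq_diff_prod n k"
    using assms(1)
  proof (induct k)
    case 0
    then show ?case by (simp add: sq_diff_prod_def)
  next
    case (Suc k)
    have f: "(fact (n - k) :: real) = real (n - k) * fact (n - Suc k)"
      using Suc.prems by (metis Suc_diff_Suc Suc_le_lessD fact_Suc)
    have "(fact (n + Suc k) :: real) * real n = real (n + Suc k) * (fact (n + k) * real n)"
      by simp
    also have "\<dots> = real (n + Suc k) * (fact (n - k) * real (n + k) * sq_diff_prod n k)"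
      using Suc by simp
    also have "\<dots> = fact (n - Suc k) * real (n + Suc k) * (sq_diff_prod n k * (real (n - k) * real (n + k)))"
      unfolding f by (simp add: algebra_simps)
    also have "real (n - k) * real (n + k) = (real n)\<^sup>2 - (real k)\<^sup>2"
      using Suc.prems by (simp add: power2_eq_square algebra_simps)
    finally show ?case
      by (simp add: sq_diff_prod_Suc)
  qed
  then have "(fact (n + k) :: real) = fact (n - k) * real (n + k) * sq_diff_prod n k / real n"
    using assms(2) by (simp add: field_simps)
  moreover have "n + k - (n - k) = 2 * k"
    using assms by simp
  then have "real ((n + k) choose (n - k)) = fact (n + k) / (odd_prod k * 2 ^ k * fact k * fact (n - k))"
    using binomial_fact[of "n - k" "n + k", where 'a = real] unfolding fact_double[symmetric]
    by (simp add: mult.commute)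
  ultimately have "real ((n + k) choose (n - k))
      = fact (n - k) * real (n + k) * sq_diff_prod n k / real n / (odd_prod k * 2 ^ k * fact k * fact (n - k))"
    by simp
  then show ?thesis
    using odd_prod_pos[of k] by simp
qed

lemma odd_prod_sq_le: "(2 * real k + 1) * (odd_prod k)\<^sup>2 \<le> (2 ^ k * fact k)\<^sup>2"
proof (induct k)
  case 0
  then show ?case by (simp add: odd_prod_def)
next
  case (Suc k)
  have "(2 * real (Suc k) + 1) * (odd_prod (Suc k))\<^sup>2
      = (2 * real k + 3) * (2 * real k + 1) * ((2 * real k + 1) * (odd_prod k)\<^sup>2)"
    by (simp add: odd_prod_def power2_eq_square algebra_simps)
  also have "\<dots> \<le> (2 * real k + 3) * (2 * real k + 1) * (2 ^ k * fact k)\<^sup>2"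
    using Suc by (intro mult_left_mono) auto
  also have "\<dots> \<le> (4 * (real k + 1)\<^sup>2) * (2 ^ k * fact k)\<^sup>2"
    by (intro mult_right_mono) (auto simp: power2_eq_square algebra_simps)
  also have "\<dots> = (2 ^ Suc k * fact (Suc k))\<^sup>2"
    by (simp add: power2_eq_square algebra_simps)
  finally show ?case .
qed

definition energy_const :: "nat \<Rightarrow> real" where
  "energy_const k = 2 ^ k * fact k / odd_prod k * (1 + 1 / real k) ^ (k - 1) / (2 * real k)"

lemma energy_const_sq_bound:
  assumes "1 \<le> k"
  shows "3 \<le> 4 * real k * (energy_const k)\<^sup>2"
proof -
  define W where "W = 2 ^ k * fact k / odd_prod k"
  define r where "r = (1 + 1 / real k) ^ (k - 1)"
  have k: "1 \<le> real k"
    using assms by simp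
  have "2 * real k + 1 \<le> W\<^sup>2"
    using odd_prod_sq_le[of k] odd_prod_pos[of k] unfolding W_def by (simp add: field_simps)
  moreover have "(2 * real k - 1) / real k \<le> r"
  proof -
    have "1 + real (k - 1) * (1 / real k) \<le> r"
      unfolding r_def by (rule Bernoulli_inequality) (simp add: order_trans[of _ 0])
    moreover have "1 + real (k - 1) * (1 / real k) = (2 * real k - 1) / real k"
      using assms k by (simp add: field_simps)
    ultimately show ?thesis by simp
  qed
  then have "((2 * real k - 1) / real k)\<^sup>2 \<le> r\<^sup>2"
    using k by (intro power_mono) auto
  ultimately have "(2 * real k + 1) * ((2 * real k - 1) / real k)\<^sup>2 \<le> W\<^sup>2 * r\<^sup>2"
    by (intro mult_mono) auto
  moreover have "3 * real k \<le> (2 * real k + 1) * ((2 * real k - 1) / real k)\<^sup>2"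
  proof -
    have "(2 * real k + 1) * (2 * real k - 1)\<^sup>2 - 3 * real k ^ 3 = (real k - 1) * (5 * (real k)\<^sup>2 + real k - 1)"
      by (simp add: power2_eq_square power3_eq_cube algebra_simps)
    also have "0 \<le> \<dots>"
      using k by (intro mult_nonneg_nonneg) (auto simp: add_increasing)
    finally show ?thesis
      using k by (simp add: field_simps power2_eq_square power3_eq_cube)
  qed
  moreover have "4 * real k * (energy_const k)\<^sup>2 = W\<^sup>2 * r\<^sup>2 / real k"
    unfolding energy_const_def W_def r_def using k by (simp add: power2_eq_square field_simps)
  ultimately show ?thesis
    using k by (simp add: pos_le_divide_eq)
qed

lemma energy_const_identity:
  assumes "1 \<le> k" "k + 2 \<le> n"
  defines "d \<equiv> real k * (real k + 1) / (real n)\<^sup>2"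
  shows "(1/2) * (1 + real k / real n) * (real n / real k) ^ (2*k) / real ((n + k) choose (n - k))
       * (sq_diff_prod n k / odd_prod k)\<^sup>2 * (d ^ (k - 1) * (((real n)\<^sup>2 - (real k)\<^sup>2) * d + real k))
     = energy_const k * sq_diff_prod n k * (((real n)\<^sup>2 - (real k)\<^sup>2) * (real k + 1) + (real n)\<^sup>2)"
proof -
  obtain j where k: "k = Suc j" using assms(1) by (cases k) auto
  define a where "a = real n"
  define c where "c = real k"
  define P where "P = sq_diff_prod n k"
  define R where "R = (1 + 1 / c) ^ j"
  define A where "A = ((a / c)\<^sup>2) ^ j"
  define s where "s = a + c"
  have pos: "0 < a" "0 < c" "0 < P" "0 < odd_prod k" "0 < A" "0 < s"
    using assms odd_prod_pos[of k] sq_diff_prod_pos[of k n]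
    unfolding a_def c_def P_def A_def s_def by simp_all
  have pow: "(real n / real k) ^ (2 * k) = (a / c)\<^sup>2 * A"
    unfolding A_def k a_def c_def by (simp flip: power_mult power_add add: mult_2_right)
  have dpow: "d ^ (k - 1) = R / A"
  proof -
    have "d = (1 + 1 / c) * (c\<^sup>2 / a\<^sup>2)"
      unfolding d_def a_def c_def using pos by (simp add: field_simps power2_eq_square)
    then have "d ^ (k - 1) = R * ((c / a)\<^sup>2) ^ j"
      unfolding R_def k by (simp add: power_mult_distrib power_divide)
    moreover have "A * ((c / a)\<^sup>2) ^ j = 1"
      unfolding A_def using pos by (simp flip: power_mult_distrib add: power_divide ac_simps)
    ultimately show ?thesis
      using pos by (simp add: eq_divide_eq mult.commute)
  qed
  have binom: "real ((n + k) choose (n - k)) = s * P / (a * odd_prod k * 2 ^ k * fact k)"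
    using binomial_eq_sq_diff_prod[of k n] assms unfolding a_def c_def P_def s_def by simp
  have ratio: "1 + real k / real n = s / a"
    using pos unfolding a_def c_def s_def by (simp add: field_simps)
  have const: "energy_const k = 2 ^ k * fact k / odd_prod k * R / (2 * c)"
    unfolding energy_const_def R_def c_def k by simp
  have dval: "d = c * (c + 1) / a\<^sup>2"
    unfolding d_def a_def c_def ..
  show ?thesis
    unfolding pow dpow binom ratio const
    unfolding dval a_def[symmetric] c_def[symmetric] P_def[symmetric]
    using pos by (simp add: field_simps power2_eq_square)
qed

lemma cheb_energy_zero_le:
  assumes "1 \<le> k" "k + 2 \<le> n"
  shows "cheb_energy n k 0
    \<le> energy_const k * sq_diff_prod n k * (((real n)\<^sup>2 - (real k)\<^sup>2) * (real k + 1) + (real n)\<^sup>2)"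
proof -
  define N where "N = (real n)\<^sup>2 - (real k)\<^sup>2"
  define v where "v = chebD n k 0"
  define v' where "v' = chebD n (Suc k) 0"
  have "(real k + 2)\<^sup>2 \<le> (real n)\<^sup>2"
    using assms by (intro power_mono) auto
  then have N: "4 * real k + 4 \<le> N"
    unfolding N_def by (simp add: power2_eq_square algebra_simps)
  have k: "1 \<le> real k"
    using assms by simp
  have c: "3 \<le> 4 * real k * (energy_const k)\<^sup>2" "0 \<le> energy_const k"
    using energy_const_sq_bound[OF assms(1)] odd_prod_pos[of k] by (simp_all add: energy_const_def)
  have P: "0 \<le> sq_diff_prod n k"
    using sq_diff_prod_pos[of k n] assms by simp
  have n2: "(real n)\<^sup>2 = N + (real k)\<^sup>2"
    unfolding N_def by simp
  have E0: "cheb_energy n k 0 = v'\<^sup>2 + (N + real k) * v\<^sup>2"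
    unfolding cheb_energy_zero v_def v'_def N_def using assms by (simp add: algebra_simps power2_eq_square)
  show ?thesis
  proof (cases "v' = 0")
    case True
    have "v ^ 4 * N \<le> (N + (real k)\<^sup>2) * (sq_diff_prod n k)\<^sup>2"
      using chebD_zero_bound[of n k] unfolding v_def N_def by simp
    then show ?thesis
      using energy_bound_value_case[OF N k c P] True unfolding E0 n2 by simp
  next
    case False
    then have "v = 0"
      using chebD_zero_mult[of n k] unfolding v_def v'_def by simp
    have "v' ^ 4 * (N - 2 * real k - 1) \<le> (N + (real k)\<^sup>2) * (sq_diff_prod n k * N)\<^sup>2"
      using chebD_zero_bound[of n "Suc k"] unfolding v'_def N_def
      by (simp add: sq_diff_prod_Suc power2_eq_square algebra_simps)
    then show ?thesis
      using energy_bound_slope_case[OF N k c P] \<open>v = 0\<close> unfolding E0 n2 by simp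
  qed
qed

lemma cheb_energy_at_omega_ge:
  assumes "1 \<le> k" "k + 2 \<le> n"
  defines "d \<equiv> real k * (real k + 1) / (real n)\<^sup>2"
  shows "(chebD n k (omega n k))\<^sup>2 * (d ^ (k - 1) * (((real n)\<^sup>2 - (real k)\<^sup>2) * d + real k))
    \<le> cheb_energy n k (omega n k)"
proof -
  define D where "D = 1 - (omega n k)\<^sup>2"
  have less: "Suc k < n"
    using assms by simp
  have "0 \<le> d"
    unfolding d_def by simp
  moreover have "d \<le> D"
    using omega_lower_bound[OF less] assms unfolding d_def D_def by (simp add: divide_le_eq mult.commute)
  moreover have "0 \<le> (real n)\<^sup>2 - (real k)\<^sup>2"
    using assms by simp
  ultimately have "d ^ (k - 1) * (((real n)\<^sup>2 - (real k)\<^sup>2) * d + real k)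
      \<le> D ^ (k - 1) * (((real n)\<^sup>2 - (real k)\<^sup>2) * D + real k)"
    by (intro mult_mono power_mono add_right_mono mult_left_mono) auto
  then show ?thesis
    unfolding cheb_energy_at_root[OF omega_root[OF less]] D_def[symmetric]
    by (simp add: mult_left_mono mult.assoc)
qed

lemma tau_sq_le:
  assumes "1 \<le> k" "k + 2 \<le> n"
  shows "(tau n k)\<^sup>2 \<le> (1/2) * (1 + real k / real n) * (real n / real k) ^ (2*k) / real ((n + k) choose (n - k))"
proof -
  define B where "B = (1/2) * (1 + real k / real n) * (real n / real k) ^ (2*k) / real ((n + k) choose (n - k))"
  define d where "d = real k * (real k + 1) / (real n)\<^sup>2"
  define Q where "Q = d ^ (k - 1) * (((real n)\<^sup>2 - (real k)\<^sup>2) * d + real k)"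
  have less: "Suc k < n"
    using assms by simp
  have "0 < d"
    unfolding d_def using assms by simp
  moreover have "(real k)\<^sup>2 \<le> (real n)\<^sup>2"
    using assms by (intro power_mono) auto
  ultimately have "0 < Q"
    unfolding Q_def using assms by (intro mult_pos_pos add_nonneg_pos) auto
  have "(chebD n k (omega n k))\<^sup>2 * Q \<le> cheb_energy n k (omega n k)"
    unfolding Q_def d_def by (rule cheb_energy_at_omega_ge[OF assms])
  also have "\<dots> \<le> cheb_energy n k 0"
    using assms omega_nonneg[OF less] omega_less_one[OF less] by (intro cheb_energy_antitone) auto
  also have "\<dots> \<le> energy_const k * sq_diff_prod n k * (((real n)\<^sup>2 - (real k)\<^sup>2) * (real k + 1) + (real n)\<^sup>2)"
    by (rule cheb_energy_zero_le[OF assms])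
  also have "\<dots> = B * (chebD n k 1)\<^sup>2 * Q"
    unfolding B_def Q_def d_def chebD_one using energy_const_identity[OF assms] by simp
  finally have "(chebD n k (omega n k))\<^sup>2 \<le> B * (chebD n k 1)\<^sup>2"
    using \<open>0 < Q\<close> by simp
  moreover have "0 < chebD n k 1"
    using chebD_one_pos[of k n] assms by simp
  ultimately show ?thesis
    unfolding tau_def B_def[symmetric] by (simp add: power_divide pos_divide_le_eq)
qed

section \<open>Stirling bounds for the binomial coefficient\<close>

lemma ln_add_one_ge:
  fixes t :: real
  assumes "0 \<le> t"
  shows "2 * t / (2 + t) \<le> ln (1 + t)"
proof -
  define f where "f x = ln (1 + x) - 2 * x / (2 + x)" for x :: real
  have "f 0 \<le> f t"
  proof (rule DERIV_nonneg_imp_nondecreasing[OF assms])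
    fix x :: real assume x: "0 \<le> x" "x \<le> t"
    have "(f has_real_derivative 1 / (1 + x) - 4 / (2 + x)\<^sup>2) (at x)"
      unfolding f_def using x by (auto intro!: derivative_eq_intros simp: power2_eq_square field_simps)
    moreover have "4 / (2 + x)\<^sup>2 \<le> 1 / (1 + x)"
      using x by (simp add: divide_simps power2_eq_square algebra_simps)
    ultimately show "\<exists>y. (f has_real_derivative y) (at x) \<and> 0 \<le> y"
      by auto
  qed
  then show ?thesis
    unfolding f_def by simp
qed

lemma ln_add_one_le:
  fixes t :: real
  assumes "0 \<le> t"
  shows "ln (1 + t) \<le> t * (6 + t) / (6 + 4 * t)"
proof -
  define f where "f x = x * (6 + x) / (6 + 4 * x) - ln (1 + x)" for x :: real
  have "f 0 \<le> f t"
  proof (rule DERIV_nonneg_imp_nondecreasing[OF assms])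
    fix x :: real assume x: "0 \<le> x" "x \<le> t"
    have "(f has_real_derivative (4 * x\<^sup>2 + 12 * x + 36) / (6 + 4 * x)\<^sup>2 - 1 / (1 + x)) (at x)"
      unfolding f_def using x by (auto intro!: derivative_eq_intros simp: power2_eq_square field_simps)
    moreover have "1 / (1 + x) \<le> (4 * x\<^sup>2 + 12 * x + 36) / (6 + 4 * x)\<^sup>2"
    proof -
      have "(4 * x\<^sup>2 + 12 * x + 36) * (1 + x) - (6 + 4 * x)\<^sup>2 = 4 * x ^ 3"
        by (simp add: algebra_simps power2_eq_square power3_eq_cube)
      then have "(6 + 4 * x)\<^sup>2 \<le> (4 * x\<^sup>2 + 12 * x + 36) * (1 + x)"
        using x by (smt (verit) zero_le_power)
      then show ?thesis
        using x by (simp add: divide_simps)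
    qed
    ultimately show "\<exists>y. (f has_real_derivative y) (at x) \<and> 0 \<le> y"
      by auto
  qed
  then show ?thesis
    unfolding f_def by simp
qed

definition stirling_rem :: "nat \<Rightarrow> real" where
  "stirling_rem m = ln (fact m) + real m - (real m + 1/2) * ln (real m)"

lemma stirling_rem_diff:
  assumes "1 \<le> m"
  shows "stirling_rem m - stirling_rem (Suc m) = (real m + 1/2) * ln (1 + 1 / real m) - 1"
proof -
  have fact: "ln (fact (Suc m) :: real) = ln (1 + real m) + ln (fact m)"
    by (simp add: ln_mult del: of_nat_Suc)
  have "1 + 1 / real m = (1 + real m) / real m"
    using assms by (simp add: field_simps)
  then have ln: "ln (1 + 1 / real m) = ln (1 + real m) - ln (real m)"
    using assms by (simp add: ln_div)
  show ?thesis
    unfolding stirling_rem_def ln fact of_nat_Suc by (simp add: algebra_simps)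
qed

lemma stirling_rem_step:
  assumes "1 \<le> m"
  shows "0 \<le> stirling_rem m - stirling_rem (Suc m)"
    and "stirling_rem m - stirling_rem (Suc m) \<le> 1 / (10 * real m) - 1 / (10 * real (Suc m))"
proof -
  define M where "M = real m"
  define t where "t = 1 / M"
  have M: "1 \<le> M" and t: "0 < t"
    unfolding M_def t_def using assms by simp_all
  have "1 = (M + 1/2) * (2 * t / (2 + t))"
    unfolding t_def using M by (simp add: field_simps)
  also have "\<dots> \<le> (M + 1/2) * ln (1 + t)"
    using ln_add_one_ge[of t] t M by (intro mult_left_mono) auto
  finally show "0 \<le> stirling_rem m - stirling_rem (Suc m)"
    unfolding stirling_rem_diff[OF assms] t_def M_def by simp
  have "(M + 1/2) * ln (1 + t) \<le> (M + 1/2) * (t * (6 + t) / (6 + 4 * t))"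
    using ln_add_one_le[of t] t M by (intro mult_left_mono) auto
  also have "t * (6 + t) / (6 + 4 * t) = (6 * M + 1) / (M * (6 * M + 4))"
  proof -
    define G where "G = 6 * M + 4"
    have "0 < M" "0 < G"
      unfolding G_def using M by simp_all
    moreover have "6 + 4 * t = G / M" "6 + t = (6 * M + 1) / M"
      unfolding t_def G_def using M by (simp_all add: field_simps)
    ultimately show ?thesis
      unfolding G_def[symmetric] t_def by (simp add: field_simps)
  qed
  also have "(M + 1/2) * ((6 * M + 1) / (M * (6 * M + 4))) \<le> 1 + (1 / (10 * M) - 1 / (10 * (M + 1)))"
  proof -
    define G where "G = M * (6 * M + 4)"
    define H where "H = 10 * M * (M + 1)"
    have "0 < G" "0 < H"
      unfolding G_def H_def using M by simp_all
    moreover have "(M + 1/2) * (6 * M + 1) * H \<le> (H + 1) * G"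
      unfolding G_def H_def using M by (simp add: algebra_simps)
    ultimately have "(M + 1/2) * ((6 * M + 1) / G) \<le> 1 + 1 / H"
      by (simp add: field_simps)
    moreover have "1 / H = 1 / (10 * M) - 1 / (10 * (M + 1))"
      unfolding H_def using M by (simp add: field_simps)
    ultimately show ?thesis
      unfolding G_def by simp
  qed
  finally show "stirling_rem m - stirling_rem (Suc m) \<le> 1 / (10 * real m) - 1 / (10 * real (Suc m))"
    unfolding stirling_rem_diff[OF assms] t_def M_def by (simp add: algebra_simps)
qed

lemma stirling_rem_antimono:
  assumes "1 \<le> m" "m \<le> m'"
  shows "stirling_rem m' \<le> stirling_rem m"
  using assms(2)
proof (induct m' rule: dec_induct)
  case (step m')
  then show ?case using stirling_rem_step(1)[of m'] assms(1) by simp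
qed simp

lemma stirling_rem_lower: "1 \<le> m \<Longrightarrow> 9/10 + 1 / (10 * real m) \<le> stirling_rem m"
proof (induct m rule: dec_induct)
  case base
  then show ?case by (simp add: stirling_rem_def)
next
  case (step m)
  then show ?case using stirling_rem_step(2)[of m] by simp
qed

lemma stirling_rem_2: "stirling_rem 2 = 2 - 3/2 * ln 2"
  unfolding stirling_rem_def by (simp add: numeral_2_eq_2)

lemma ln_pi_bound: "11/5 + ln pi \<le> 5 * ln (2::real)"
proof -
  have "19/20 \<le> exp (-1/20 :: real)"
    using exp_ge_add_one_self[of "-1/20::real"] by simp
  then have "exp (1/20 :: real) \<le> 20/19"
    by (simp add: exp_minus field_simps)
  then have "exp (11/5 :: real) \<le> (20/19) ^ 44"
    using exp_of_nat_mult[of 44 "1/20::real"] power_mono[of "exp (1/20::real)" "20/19" 44] by simp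
  then have "exp (11/5 :: real) * pi \<le> (20/19) ^ 44 * 3.1415926535899"
    using pi_approx(2) by (intro mult_mono) auto
  also have "\<dots> \<le> 32"
    by (simp add: power_divide)
  finally have "ln (exp (11/5 :: real) * pi) \<le> ln 32"
    by (subst ln_le_cancel_iff) auto
  moreover have "ln (32::real) = 5 * ln 2"
    using ln_realpow[of 2 5] by simp
  ultimately show ?thesis
    by (simp add: ln_mult)
qed

lemma ln_binomial_stirling_rem:
  assumes "1 \<le> k" "k \<le> n"
  shows "ln (real ((n + k) choose (n - k)))
    = stirling_rem (n + k) - stirling_rem (2 * k) - stirling_rem (n - k)
      + (real (n + k) + 1/2) * ln (real (n + k)) - (2 * real k + 1/2) * (ln 2 + ln (real k))
      - (real (n - k) + 1/2) * ln (real (n - k))"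
proof -
  have "n + k - (n - k) = 2 * k"
    using assms by simp
  then have "real ((n + k) choose (n - k)) = fact (n + k) / (fact (2 * k) * fact (n - k))"
    using binomial_fact[of "n - k" "n + k", where 'a = real] by (simp add: mult.commute)
  then have "ln (real ((n + k) choose (n - k))) = ln (fact (n + k)) - ln (fact (2 * k)) - ln (fact (n - k))"
    by (simp add: ln_div ln_mult)
  moreover have "ln (fact m :: real) = stirling_rem m - real m + (real m + 1/2) * ln (real m)" for m
    unfolding stirling_rem_def by simp
  ultimately show ?thesis
    using assms by (simp add: ln_mult algebra_simps)
qed

lemma ln_stirling_upper_expr:
  fixes a :: real and k p q :: nat
  assumes "0 < a" "0 < k" "0 < p" "0 < q"
  shows "ln (exp 2 / (2 * sqrt pi) * sqrt (real k) * sqrt (real p * real q / a\<^sup>2)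
      * (2 * a) ^ (2 * k) * real p ^ p / real q ^ q)
    = 2 - ln 2 - ln pi / 2 + ln (real k) / 2 + (ln (real p) + ln (real q) - 2 * ln a) / 2
      + 2 * real k * (ln 2 + ln a) + real p * ln (real p) - real q * ln (real q)"
proof -
  have "ln (exp 2 / (2 * sqrt pi) * sqrt (real k) * sqrt (real p * real q / a\<^sup>2)
      * (2 * a) ^ (2 * k) * real p ^ p / real q ^ q)
    = ln (exp 2 / (2 * sqrt pi)) + ln (sqrt (real k)) + ln (sqrt (real p * real q / a\<^sup>2))
      + ln ((2 * a) ^ (2 * k)) + ln (real p ^ p) - ln (real q ^ q)"
    using assms by (simp add: ln_mult ln_div)
  moreover have "ln (exp 2 / (2 * sqrt pi)) = 2 - ln 2 - ln pi / 2"
    by (simp add: ln_div ln_mult ln_sqrt)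
  moreover have "ln (sqrt (real p * real q / a\<^sup>2)) = (ln (real p) + ln (real q) - 2 * ln a) / 2"
    using assms by (simp add: ln_sqrt ln_div ln_mult ln_realpow)
  moreover have "ln ((2 * a) ^ (2 * k)) = 2 * real k * (ln 2 + ln a)"
    using assms by (simp add: ln_realpow ln_mult algebra_simps)
  ultimately show ?thesis
    using assms by (simp add: ln_sqrt ln_realpow)
qed

lemma binomial_bound_le_stirling:
  assumes "1 \<le> k" "k + 2 \<le> n"
  shows "(1/2) * (1 + real k / real n) * (real n / real k) ^ (2*k) / real ((n + k) choose (n - k))
    \<le> (exp 2 / (2 * sqrt pi)) * sqrt (real k) * sqrt (1 - (real k)\<^sup>2 / (real n)\<^sup>2)
      * (2 * real n) ^ (2*k) * real (n - k) ^ (n - k) / real (n + k) ^ (n + k)"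
    (is "?L \<le> ?R")
proof -
  define a where "a = real n"
  define c where "c = real k"
  define p where "p = real (n - k)"
  define q where "q = real (n + k)"
  define C where "C = real ((n + k) choose (n - k))"
  have pos: "0 < a" "0 < c" "0 < p" "0 < q" "0 < C"
    using assms unfolding a_def c_def p_def q_def C_def by simp_all
  have pq: "p = a - c" "q = a + c"
    using assms unfolding p_def q_def a_def c_def by simp_all
  have L: "?L = (1/2) * (q / a) * (a / c) ^ (2 * k) / C"
    using pos unfolding a_def c_def q_def C_def by (simp add: field_simps)
  have "1 - (real k)\<^sup>2 / (real n)\<^sup>2 = p * q / a\<^sup>2"
    using pos unfolding pq a_def c_def by (simp add: field_simps power2_eq_square)
  then have R: "?R = exp 2 / (2 * sqrt pi) * sqrt c * sqrt (p * q / a\<^sup>2) * (2 * a) ^ (2 * k)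
      * p ^ (n - k) / q ^ (n + k)"
    unfolding a_def c_def p_def q_def by simp
  have "ln ?L = - ln 2 + (ln q - ln a) + 2 * c * (ln a - ln c) - ln C"
    unfolding L using pos by (simp add: ln_mult ln_div ln_realpow c_def)
  moreover have "ln ?R = (2 - ln 2 - ln pi / 2) + ln c / 2 + (ln p + ln q - 2 * ln a) / 2
      + 2 * c * (ln 2 + ln a) + p * ln p - q * ln q"
    unfolding R c_def p_def q_def using assms pos(1) by (intro ln_stirling_upper_expr) auto
  moreover have "ln C = stirling_rem (n + k) - stirling_rem (2 * k) - stirling_rem (n - k)
      + (q + 1/2) * ln q - (2 * c + 1/2) * (ln 2 + ln c) - (p + 1/2) * ln p"
    unfolding C_def q_def c_def p_def using assms by (intro ln_binomial_stirling_rem) auto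
  ultimately have "ln ?L - ln ?R = stirling_rem (2 * k) + stirling_rem (n - k) - stirling_rem (n + k)
      + ln 2 / 2 + ln pi / 2 - 2"
    unfolding pq by (simp add: algebra_simps diff_divide_distrib add_divide_distrib)
  also have "\<dots> \<le> 0"
  proof -
    have "stirling_rem (2 * k) \<le> stirling_rem 2" "stirling_rem (n - k) \<le> stirling_rem 2"
      using assms by (intro stirling_rem_antimono; simp)+
    moreover have "9/10 + 1 / (10 * real (n + k)) \<le> stirling_rem (n + k)" "0 \<le> 1 / (10 * real (n + k))"
      using stirling_rem_lower[of "n + k"] assms by simp_all
    ultimately show ?thesis
      using stirling_rem_2 ln_pi_bound by linarith
  qed
  finally show ?thesis
    using pos unfolding L R by simp
qed

theorem theorem1p4:
  fixes n k :: nat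
  assumes "k \<ge> 1" and "n \<ge> k + 2"
  shows "(tau n k)^2 \<le> (1/2) * (1 + real k / real n) * (real n / real k) ^ (2*k)
                          / real ((n + k) choose (n - k))
       \<and> (1/2) * (1 + real k / real n) * (real n / real k) ^ (2*k)
            / real ((n + k) choose (n - k))
         \<le> (exp 2 / (2 * sqrt pi)) * sqrt (real k) * sqrt (1 - (real k)^2 / (real n)^2)
            * (2 * real n) ^ (2*k) * real (n - k) ^ (n - k) / real (n + k) ^ (n + k)"
  using tau_sq_le[OF assms] binomial_bound_le_stirling[OF assms] by (rule conjI)

end
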